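(* Let $q$ be a root of unity with $q^4\ne1$, $\sigma$ general and $w\in\mathbb C$. Then the image of the map $(\Pi_s,\Pi_t):E^0_{\sigma,w}\to\mathbb C^2$ is exactly the curve $\{(x,y)\in\mathbb C^2: xy=R(z_0,w)\}$, where $$R(z_0,w)=\begin{cases}\dfrac{T_N(w)+z_0^2-2}{z_0^2-4},&n\text{ odd},\\[2mm] \left(\dfrac{T_N(w)+\epsilon^2z_0}{z_0-2}\right)^2,&n\text{ even}.\end{cases}$$
   Context: $q$ is a root of unity, $n=\mathrm{ord}(q^2)$, $N=\mathrm{ord}(q^4)$, $\epsilon=q^{N^2}$, $D=n$, and $T_k$ is the Chebyshev polynomial with $T_k(t+t^{-1})=t^k+t^{-k}$. For $\sigma\in\mathbb C^\times$ set $z_0=\sigma^D+\sigma^{-D}$, $\hat\lambda_i=q^{2i}\sigma-q^{-2i}\sigma^{-1}$ ($i\in\mathbb Z/D$). $\sigma$ is general if $z_0\neq\pm2$, or $z_0=-2$ and $n$ is even (equivalently all $\hat\lambda_i\ne0$). For general $\sigma$ and $w\in\mathbb C$: $r_i(\sigma,w)=\dfrac{w+q^{4i+2}\sigma^2+q^{-4i-2}\sigma^{-2}}{\hat\lambda_i\hat\lambda_{i+1}}$, $E^0_{\sigma,w}=\{(s_1,\dots,s_D,t_1,\dots,t_D)\in\mathbb C^{2D}:s_it_i=r_i(\sigma,w)\ \forall i\}$, $\Pi_s=\prod_{i=1}^Ds_i$, $\Pi_t=\prod_{i=1}^Dt_i$. *)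

theory Defs
  imports Complex_Main
begin

definition root_of_unity :: "complex \<Rightarrow> bool" where
  "root_of_unity q \<longleftrightarrow> (\<exists>k::nat. k > 0 \<and> q ^ k = 1)"

definition cord :: "complex \<Rightarrow> nat" where
  "cord z = (LEAST k::nat. k > 0 \<and> z ^ k = 1)"

definition n_of :: "complex \<Rightarrow> nat" where "n_of q = cord (q ^ 2)"
definition N_of :: "complex \<Rightarrow> nat" where "N_of q = cord (q ^ 4)"
definition eps_of :: "complex \<Rightarrow> complex" where "eps_of q = q ^ ((N_of q)\<^sup>2)"

text \<open>Chebyshev polynomial: T_k(t + t^-1) = t^k + t^-k (well defined; t and 1/t give the same value).\<close>
definition cheb :: "nat \<Rightarrow> complex \<Rightarrow> complex" where
  "cheb k w = (let t = (SOME t::complex. t \<noteq> 0 \<and> t + inverse t = w) in t ^ k + inverse t ^ k)"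

definition z0 :: "complex \<Rightarrow> complex \<Rightarrow> complex" where
  "z0 q \<sigma> = \<sigma> ^ n_of q + inverse \<sigma> ^ n_of q"

definition lam_hat :: "complex \<Rightarrow> complex \<Rightarrow> nat \<Rightarrow> complex" where
  "lam_hat q \<sigma> i = q ^ (2*i) * \<sigma> - inverse (q ^ (2*i)) * inverse \<sigma>"

definition general :: "complex \<Rightarrow> complex \<Rightarrow> bool" where
  "general q \<sigma> \<longleftrightarrow> (z0 q \<sigma> \<noteq> 2 \<and> z0 q \<sigma> \<noteq> -2) \<or> (z0 q \<sigma> = -2 \<and> even (n_of q))"

definition r_coef :: "complex \<Rightarrow> complex \<Rightarrow> complex \<Rightarrow> nat \<Rightarrow> complex" where
  "r_coef q \<sigma> w i = (w + q ^ (4*i+2) * \<sigma>\<^sup>2 + inverse (q ^ (4*i+2)) * inverse (\<sigma>\<^sup>2))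
      / (lam_hat q \<sigma> i * lam_hat q \<sigma> (i+1))"

text \<open>E^0_{sigma,w}: points (s_1..s_D, t_1..t_D), encoded as pairs of functions restricted to {1..D}.\<close>
definition E0 :: "complex \<Rightarrow> complex \<Rightarrow> complex \<Rightarrow> ((nat \<Rightarrow> complex) \<times> (nat \<Rightarrow> complex)) set" where
  "E0 q \<sigma> w = {(s, t). (\<forall>i\<in>{1..n_of q}. s i * t i = r_coef q \<sigma> w i)
                  \<and> (\<forall>i. i \<notin> {1..n_of q} \<longrightarrow> s i = 0 \<and> t i = 0)}"

definition R_fun :: "complex \<Rightarrow> complex \<Rightarrow> complex \<Rightarrow> complex" where
  "R_fun q z w = (if odd (n_of q) then (cheb (N_of q) w + z\<^sup>2 - 2) / (z\<^sup>2 - 4)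
                  else ((cheb (N_of q) w + (eps_of q)\<^sup>2 * z) / (z - 2))\<^sup>2)"

end

theory Submission
  imports Defs "HOL-Computational_Algebra.Polynomial"
begin

text \<open>Write \<open>w = t + t\<inverse>\<close>. Then numerator and denominator of \<open>r\<^sub>i(\<sigma>, w)\<close> split into
  factors of the form \<open>x - \<zeta>\<^sup>i y\<close> with \<open>\<zeta> = q\<^sup>4\<close>. Since \<open>n\<close> is a multiple of \<open>N = ord \<zeta>\<close>, each
  product over \<open>i = 1..n\<close> collapses by \<open>\<Prod>\<^sub>i\<^sub><\<^sub>N (x - \<zeta>\<^sup>i y) = x\<^sup>N - y\<^sup>N\<close>. Either \<open>n\<close> is odd and
  \<open>n = N\<close>, or \<open>n = 2N\<close> and \<open>q\<^sup>2\<^sup>N = -1\<close>; in both cases \<open>\<Prod>\<^sub>i r\<^sub>i\<close> becomes a rational function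
  of \<open>t\<^sup>N\<close> and \<open>\<sigma>\<^sup>n\<close> which equals \<open>R(z\<^sub>0, w)\<close>, as \<open>T\<^sub>N(w) = t\<^sup>N + t\<^sup>-\<^sup>N\<close>. Finally \<open>(\<Pi>\<^sub>s, \<Pi>\<^sub>t)\<close> maps
  the solutions of \<open>s\<^sub>i t\<^sub>i = r\<^sub>i\<close> onto the hyperbola \<open>x y = \<Prod>\<^sub>i r\<^sub>i\<close>, since a single pair
  \<open>(s\<^sub>j, t\<^sub>j)\<close> can absorb any point of it.\<close>

lemma inj_on_power_primitive_root:
  fixes \<zeta> :: "'a::idom"
  assumes "\<zeta> ^ m = 1" and "\<And>k. 0 < k \<Longrightarrow> k < m \<Longrightarrow> \<zeta> ^ k \<noteq> 1"
  shows "inj_on (power \<zeta>) {a..<a+m}"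
proof (rule linorder_inj_onI)
  fix i j assume ij: "i < j" "i \<in> {a..<a+m}" "j \<in> {a..<a+m}"
  have "\<zeta> \<noteq> 0" using assms(1) ij by (cases m) auto
  moreover have "\<zeta> ^ (j - i) \<noteq> 1" using assms(2) ij by auto
  ultimately show "\<zeta> ^ i \<noteq> \<zeta> ^ j"
    using \<open>i < j\<close> by (metis le_add_diff_inverse less_imp_le mult_cancel_left1 power_add power_not_zero)
qed auto

lemma prod_sub_primitive_root_powers:
  fixes \<zeta> x y :: "'a::idom"
  assumes "0 < m" and "\<zeta> ^ m = 1" and "\<And>k. 0 < k \<Longrightarrow> k < m \<Longrightarrow> \<zeta> ^ k \<noteq> 1"
  shows "(\<Prod>i\<in>{a..<a+m}. x - \<zeta> ^ i * y) = x ^ m - y ^ m"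
proof (cases "y = 0")
  case True
  then show ?thesis using \<open>0 < m\<close> by simp
next
  case False
  define P where "P = (\<Prod>i\<in>{a..<a+m}. [:- (\<zeta> ^ i * y), 1:])"
  define Q where "Q = monom 1 m - [:y ^ m:]"
  have "P = Q"
  proof (rule poly_eqI_degree_lead_coeff[where n = m and A = "(\<lambda>i. \<zeta> ^ i * y) ` {a..<a+m}"])
    have "degree P = m" unfolding P_def by (subst degree_prod_eq_sum_degree) auto
    moreover have "lead_coeff P = 1" unfolding P_def by (simp add: lead_coeff_prod)
    moreover have "coeff Q m = 1" using \<open>0 < m\<close> by (cases m) (simp_all add: Q_def)
    ultimately show "degree P \<le> m" and "coeff P m = coeff Q m" by simp_all
    show "degree Q \<le> m"
      unfolding Q_def by (rule order.trans[OF degree_diff_le_max]) (simp add: degree_monom_le)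
    have "inj_on (\<lambda>i. \<zeta> ^ i * y) {a..<a+m}"
      using inj_on_power_primitive_root[OF assms(2,3)] False by (auto simp: inj_on_def)
    then show "m \<le> card ((\<lambda>i. \<zeta> ^ i * y) ` {a..<a+m})" by (simp add: card_image)
    fix z assume "z \<in> (\<lambda>i. \<zeta> ^ i * y) ` {a..<a+m}"
    then obtain j where j: "j \<in> {a..<a+m}" "z = \<zeta> ^ j * y" by auto
    have "(\<zeta> ^ j) ^ m = 1" by (metis assms(2) power_mult mult.commute power_one)
    then have "poly Q z = 0" using j by (simp add: Q_def poly_monom power_mult_distrib)
    moreover have "poly P z = 0" using j by (auto simp: P_def poly_prod intro: prod_zero)
    ultimately show "poly P z = poly Q z" by simp
  qed
  then have "poly P x = poly Q x" by simp
  then show ?thesis by (simp add: P_def Q_def poly_prod poly_monom)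
qed

lemma prod_sub_primitive_root_powers_periods:
  fixes \<zeta> x y :: "'a::idom"
  assumes "0 < m" and "\<zeta> ^ m = 1" and "\<And>k. 0 < k \<Longrightarrow> k < m \<Longrightarrow> \<zeta> ^ k \<noteq> 1"
  shows "(\<Prod>i\<in>{a..<a+m*k}. x - \<zeta> ^ i * y) = (x ^ m - y ^ m) ^ k"
proof (induction k)
  case (Suc k)
  have "(\<Prod>i\<in>{a..<a+m*Suc k}. x - \<zeta> ^ i * y) =
      (\<Prod>i\<in>{a..<a+m*k}. x - \<zeta> ^ i * y) * (\<Prod>i\<in>{a+m*k..<a+m*k+m}. x - \<zeta> ^ i * y)"
    unfolding mult_Suc_right add.assoc[symmetric] add.commute[of m]
    by (rule prod.atLeastLessThan_concat[symmetric]) auto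
  with Suc show ?case by (simp add: prod_sub_primitive_root_powers[OF assms])
qed simp

lemma ex_add_inverse_eq: "\<exists>t::complex. t \<noteq> 0 \<and> t + inverse t = w"
proof -
  define s where "s = csqrt (w\<^sup>2 - 4)"
  define t where "t = (w + s) / 2"
  have s2: "s\<^sup>2 = w\<^sup>2 - 4" unfolding s_def by simp
  have "t \<noteq> 0"
  proof
    assume "t = 0"
    then have "s = - w" unfolding t_def by (simp add: add_eq_0_iff)
    with s2 show False by simp
  qed
  moreover have "t * t + 1 - w * t = (s\<^sup>2 - (w\<^sup>2 - 4)) / 4"
    unfolding t_def by (simp add: field_simps power2_eq_square)
  then have "t * t + 1 - w * t = 0" using s2 by simp
  ultimately show ?thesis by (intro exI[of _ t]) (simp add: field_simps)
qed

lemma add_inverse_eq_iff: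
  fixes s t :: "'a::field"
  assumes "s \<noteq> 0" "t \<noteq> 0"
  shows "s + inverse s = t + inverse t \<longleftrightarrow> s = t \<or> s = inverse t"
proof -
  have "s + inverse s = t + inverse t \<longleftrightarrow> (s - t) * (s * t - 1) / (s * t) = 0"
    using assms by (simp add: field_simps)
  also have "\<dots> \<longleftrightarrow> s = t \<or> s * t = 1" using assms by simp
  also have "s * t = 1 \<longleftrightarrow> s = inverse t" using assms by (auto simp: field_simps)
  finally show ?thesis .
qed

lemma R_odd_eq_rational:
  fixes \<tau> S :: "'a::field"
  assumes "\<tau> \<noteq> 0" "S \<noteq> 0"
  shows "(\<tau> + inverse \<tau> + (S + inverse S)^2 - 2) / ((S + inverse S)^2 - 4)
       = (\<tau> + S^2) * (1 + \<tau> * S^2) / (\<tau> * (1 - S^2)^2)"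
proof -
  have "\<tau> + inverse \<tau> + (S + inverse S)^2 - 2 = (\<tau> + S^2) * (1 + \<tau> * S^2) / (\<tau> * S^2)"
    and "(S + inverse S)^2 - 4 = (1 - S^2)^2 / S^2"
    using assms by (simp_all add: field_simps power2_eq_square)
  then show ?thesis using assms by simp
qed

lemma R_even_eq_rational:
  fixes \<tau> S e :: "'a::field"
  assumes "\<tau> \<noteq> 0" "S \<noteq> 0" "e^2 = 1"
  shows "((\<tau> + inverse \<tau> + e * (S + inverse S)) / (S + inverse S - 2))^2
       = ((\<tau> + e * S) * (1 + e * \<tau> * S))^2 / (\<tau>^2 * (1 - S)^4)"
proof -
  have "\<tau> + inverse \<tau> + e * (S + inverse S) = e * ((\<tau> + e * S) * (1 + e * \<tau> * S)) / (\<tau> * S)"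
    using assms by (simp add: field_simps power2_eq_square)
  moreover have "S + inverse S - 2 = (1 - S)^2 / S"
    using assms by (simp add: field_simps power2_eq_square)
  ultimately show ?thesis using assms
    by (simp add: power_divide power_mult_distrib flip: power_mult)
qed

lemma image_prod_pairs_eq_hyperbola:
  fixes r :: "'i \<Rightarrow> 'a::field"
  assumes "finite I" "I \<noteq> {}"
  shows "(\<lambda>(s, t). (\<Prod>i\<in>I. s i, \<Prod>i\<in>I. t i)) `
           {(s, t). (\<forall>i\<in>I. s i * t i = r i) \<and> (\<forall>i. i \<notin> I \<longrightarrow> s i = 0 \<and> t i = 0)}
       = {(x, y). x * y = (\<Prod>i\<in>I. r i)}" (is "?f ` ?E = ?C")
proof
  show "?f ` ?E \<subseteq> ?C"
  proof
    fix z assume "z \<in> ?f ` ?E"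
    then obtain s t where st: "\<forall>i\<in>I. s i * t i = r i" and z: "z = ?f (s, t)" by auto
    have "(\<Prod>i\<in>I. s i) * (\<Prod>i\<in>I. t i) = (\<Prod>i\<in>I. r i)"
      using st by (simp flip: prod.distrib)
    then show "z \<in> ?C" using z by simp
  qed
next
  have in_image: "(\<Prod>i\<in>I. s i, \<Prod>i\<in>I. t i) \<in> ?f ` ?E" if "\<And>i. s i * t i = r i" for s t
  proof (rule rev_image_eqI)
    let ?s = "\<lambda>i. if i \<in> I then s i else 0" and ?t = "\<lambda>i. if i \<in> I then t i else 0"
    show "(?s, ?t) \<in> ?E" using that by simp
    show "(\<Prod>i\<in>I. s i, \<Prod>i\<in>I. t i) = ?f (?s, ?t)" by simp
  qed
  show "?C \<subseteq> ?f ` ?E"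
  proof clarify
    fix x y assume xy: "x * y = (\<Prod>i\<in>I. r i)"
    show "(x, y) \<in> ?f ` ?E"
    proof (cases "x = 0")
      case True
      then obtain j where "j \<in> I" "r j = 0" using xy assms(1) by auto
      have "(\<Prod>i\<in>I. if i = j then 0 else r i) = x" using True \<open>j \<in> I\<close> assms(1) by auto
      moreover have "(\<Prod>i\<in>I. if i = j then y else 1) = y" using \<open>j \<in> I\<close> assms(1) by simp
      ultimately show ?thesis
        using in_image[of "\<lambda>i. if i = j then 0 else r i" "\<lambda>i. if i = j then y else 1"] \<open>r j = 0\<close>
        by (auto split: if_splits)
    next
      case False
      obtain j where "j \<in> I" using assms(2) by blast
      have "(\<Prod>i\<in>I. if i = j then x else 1) = x" using \<open>j \<in> I\<close> assms(1) by simp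
      moreover have "(\<Prod>i\<in>I. r i * (if i = j then inverse x else 1)) = y"
        using \<open>j \<in> I\<close> assms(1) xy False by (simp add: prod.distrib field_simps)
      ultimately show ?thesis
        using in_image[of "\<lambda>i. if i = j then x else 1" "\<lambda>i. r i * (if i = j then inverse x else 1)"]
          False by simp
    qed
  qed
qed

lemma root_of_unity_power: "root_of_unity q \<Longrightarrow> root_of_unity (q ^ j)"
  unfolding root_of_unity_def by (metis power_mult mult.commute power_one)

lemma
  assumes "root_of_unity z"
  shows cord_pos: "0 < cord z"
    and power_cord: "z ^ cord z = 1"
    and power_ne_one_below_cord: "0 < k \<Longrightarrow> k < cord z \<Longrightarrow> z ^ k \<noteq> 1"
proof -
  obtain j where "0 < j \<and> z ^ j = 1" using assms unfolding root_of_unity_def by blast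
  then have "0 < cord z \<and> z ^ cord z = 1" unfolding cord_def by (rule LeastI)
  then show "0 < cord z" "z ^ cord z = 1" by auto
  show "0 < k \<Longrightarrow> k < cord z \<Longrightarrow> z ^ k \<noteq> 1"
    unfolding cord_def using not_less_Least by blast
qed

lemma cord_dvd:
  assumes "root_of_unity z" "z ^ k = 1"
  shows "cord z dvd k"
proof -
  have "z ^ k = (z ^ cord z) ^ (k div cord z) * z ^ (k mod cord z)"
    by (simp only: power_mult[symmetric] power_add[symmetric] mult_div_mod_eq)
  then have "z ^ (k mod cord z) = 1" using assms power_cord by simp
  moreover have "k mod cord z < cord z" using cord_pos[OF assms(1)] by simp
  ultimately have "k mod cord z = 0" using power_ne_one_below_cord[OF assms(1)] by blast
  then show ?thesis by (simp add: mod_eq_0_iff_dvd)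
qed

lemma cord_power2_cases:
  assumes "root_of_unity p"
  obtains "odd (cord p)" "cord (p\<^sup>2) = cord p"
        | "cord p = 2 * cord (p\<^sup>2)" "p ^ cord (p\<^sup>2) = -1"
proof -
  define n N where "n = cord p" and "N = cord (p\<^sup>2)"
  have rp2: "root_of_unity (p\<^sup>2)" using assms by (rule root_of_unity_power)
  have "(p\<^sup>2) ^ n = 1" unfolding n_def by (metis assms power_cord power_mult mult.commute power_one)
  then obtain d where nd: "n = N * d" unfolding N_def using cord_dvd[OF rp2] by blast
  have "p ^ (2 * N) = 1" unfolding N_def by (metis rp2 power_cord power_mult)
  then obtain c where "2 * N = n * c" unfolding n_def using cord_dvd[OF assms] by blast
  with nd have "d * c = 2" using cord_pos[OF rp2] unfolding N_def by (simp add: ac_simps)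
  then have "d dvd 2" by (metis dvd_triv_left)
  then have "d = 1 \<or> d = 2" using dvd_imp_le[of d 2] by (cases d) auto
  then show thesis
  proof
    assume "d = 1"
    then have "N = n" using nd by simp
    have "odd n"
    proof
      assume "even n"
      then obtain m where m: "n = 2 * m" by blast
      have "(p\<^sup>2) ^ m = 1"
        using power_cord[OF assms] m unfolding n_def by (simp add: power_mult[symmetric])
      moreover have "0 < m" "m < N" using cord_pos[OF assms] m \<open>N = n\<close> unfolding n_def by simp_all
      ultimately show False using power_ne_one_below_cord[OF rp2] unfolding N_def by blast
    qed
    then show thesis using \<open>N = n\<close> unfolding n_def N_def by (rule that(1))
  next
    assume "d = 2"
    then have "n = 2 * N" using nd by simp
    have "(p ^ N)\<^sup>2 = 1" using power_cord[OF rp2] unfolding N_def by (metis power_mult mult.commute)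
    moreover have "p ^ N \<noteq> 1"
      using power_ne_one_below_cord[OF assms, of N] cord_pos[OF rp2] \<open>n = 2 * N\<close>
      unfolding n_def N_def by simp
    ultimately have "p ^ N = -1" by (simp add: power2_eq_1_iff)
    with \<open>n = 2 * N\<close> show thesis unfolding n_def N_def by (rule that(2))
  qed
qed

lemma n_of_cases:
  assumes "root_of_unity q"
  obtains "odd (n_of q)" "N_of q = n_of q"
        | "n_of q = 2 * N_of q" "q ^ (2 * N_of q) = -1"
proof -
  have "(q^2)^2 = q^4" by simp
  then show thesis
    using cord_power2_cases[OF root_of_unity_power[OF assms]] that
    unfolding n_of_def N_of_def by (metis power_mult)
qed

lemma cheb_add_inverse:
  assumes "t \<noteq> 0"
  shows "cheb k (t + inverse t) = t ^ k + inverse t ^ k"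
proof -
  define s where "s = (SOME s::complex. s \<noteq> 0 \<and> s + inverse s = t + inverse t)"
  have "s \<noteq> 0 \<and> s + inverse s = t + inverse t"
    unfolding s_def by (rule someI[where P = "\<lambda>s. s \<noteq> 0 \<and> s + inverse s = t + inverse t"])
      (use assms in simp)
  then have "s = t \<or> s = inverse t" using assms add_inverse_eq_iff by blast
  then have "s ^ k + inverse s ^ k = t ^ k + inverse t ^ k" by auto
  then show ?thesis unfolding cheb_def s_def[symmetric] Let_def .
qed

lemma r_coef_add_inverse:
  fixes q \<sigma> t :: complex
  assumes "q \<noteq> 0" "\<sigma> \<noteq> 0" "t \<noteq> 0"
  shows "r_coef q \<sigma> (t + inverse t) i =
    (t - (q^4)^i * (- (q^2 * \<sigma>^2))) * (1 - (q^4)^i * (- (q^2 * \<sigma>^2) * t)) /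
    (t * ((1 - (q^4)^i * \<sigma>^2) * (1 - (q^4)^i * (q^4 * \<sigma>^2))))"
proof -
  define Q where "Q = q ^ (2 * i)"
  have "Q \<noteq> 0" using assms by (simp add: Q_def)
  have "q ^ (4 * i) = Q^2"
    unfolding Q_def by (simp flip: power_mult add: mult.commute mult.left_commute)
  then have powers: "q ^ (4 * i + 2) = Q^2 * q^2" "q ^ (2 * (i + 1)) = Q * q^2" "(q^4)^i = Q^2"
    unfolding Q_def by (simp_all add: power_add power2_eq_square flip: power_mult)
  define K where "K = inverse (t * (Q^2 * q^2 * \<sigma>^2))"
  have "K \<noteq> 0" using assms \<open>Q \<noteq> 0\<close> by (simp add: K_def)
  have "t + inverse t + Q^2 * q^2 * \<sigma>^2 + inverse (Q^2 * q^2) * inverse (\<sigma>^2)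
      = K * ((t - Q^2 * (- (q^2 * \<sigma>^2))) * (1 - Q^2 * (- (q^2 * \<sigma>^2) * t)))"
    unfolding K_def using assms \<open>Q \<noteq> 0\<close> by (simp add: field_simps)
  moreover have "(Q * \<sigma> - inverse Q * inverse \<sigma>) * (Q * q^2 * \<sigma> - inverse (Q * q^2) * inverse \<sigma>)
      = K * (t * ((1 - Q^2 * \<sigma>^2) * (1 - Q^2 * (q^4 * \<sigma>^2))))"
    unfolding K_def using assms \<open>Q \<noteq> 0\<close>
    by (simp add: field_simps) (simp add: eval_nat_numeral algebra_simps)
  ultimately show ?thesis
    unfolding r_coef_def lam_hat_def powers Q_def[symmetric]
    using mult_divide_mult_cancel_left[OF \<open>K \<noteq> 0\<close>] by simp
qed

lemma prod_r_coef_add_inverse: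
  fixes q \<sigma> t :: complex
  assumes "root_of_unity q" "\<sigma> \<noteq> 0" "t \<noteq> 0" "n_of q = N_of q * d"
  defines "c \<equiv> (- (q^2)) ^ N_of q" and "U \<equiv> \<sigma> ^ (2 * N_of q)"
  shows "(\<Prod>i\<in>{1..n_of q}. r_coef q \<sigma> (t + inverse t) i)
       = ((t ^ N_of q - c * U) * (1 - c * t ^ N_of q * U)) ^ d / ((t ^ N_of q) ^ d * (1 - U) ^ (2 * d))"
proof -
  define N \<zeta> where "N = N_of q" and "\<zeta> = q^4"
  have "q \<noteq> 0" using assms(1) unfolding root_of_unity_def by (auto simp: zero_power)
  have "root_of_unity \<zeta>" unfolding \<zeta>_def using assms(1) by (rule root_of_unity_power)
  have "N = cord \<zeta>" unfolding N_def N_of_def \<zeta>_def ..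
  have factors: "(\<Prod>i\<in>{1..n_of q}. x - \<zeta> ^ i * y) = (x ^ N - y ^ N) ^ d" for x y
  proof -
    have "{1..n_of q} = {1..<1 + N * d}" using assms(4) unfolding N_def by auto
    moreover have "(\<Prod>i\<in>{1..<1 + N * d}. x - \<zeta> ^ i * y) = (x ^ N - y ^ N) ^ d"
      unfolding \<open>N = cord \<zeta>\<close> by (rule prod_sub_primitive_root_powers_periods)
        (simp_all add: \<open>root_of_unity \<zeta>\<close> cord_pos power_cord power_ne_one_below_cord)
    ultimately show ?thesis by simp
  qed
  have "\<zeta> ^ N = 1" using power_cord[OF \<open>root_of_unity \<zeta>\<close>] \<open>N = cord \<zeta>\<close> by simp
  have U: "(\<sigma>^2) ^ N = U" unfolding U_def N_def by (simp add: power_mult)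
  have cU: "(- (q^2 * \<sigma>^2)) ^ N = c * U"
    using U unfolding c_def N_def[symmetric] minus_mult_left by (simp only: power_mult_distrib)
  then have cUt: "(- (q^2 * \<sigma>^2) * t) ^ N = c * t ^ N * U"
    by (simp only: power_mult_distrib) (simp add: ac_simps)
  have U4: "(q^4 * \<sigma>^2) ^ N = U"
    using \<open>\<zeta> ^ N = 1\<close> U unfolding \<zeta>_def by (simp add: power_mult_distrib)
  have tn: "t ^ n_of q = (t ^ N) ^ d" unfolding assms(4) N_def by (simp add: power_mult)
  have "(\<Prod>i\<in>{1..n_of q}. r_coef q \<sigma> (t + inverse t) i)
      = (\<Prod>i\<in>{1..n_of q}. t - \<zeta> ^ i * (- (q^2 * \<sigma>^2))) * (\<Prod>i\<in>{1..n_of q}. 1 - \<zeta> ^ i * (- (q^2 * \<sigma>^2) * t))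
        / (t ^ n_of q * ((\<Prod>i\<in>{1..n_of q}. 1 - \<zeta> ^ i * \<sigma>^2) * (\<Prod>i\<in>{1..n_of q}. 1 - \<zeta> ^ i * (q^4 * \<sigma>^2))))"
    unfolding r_coef_add_inverse[OF \<open>q \<noteq> 0\<close> assms(2,3)] \<zeta>_def[symmetric]
    by (simp only: prod_dividef prod.distrib prod_constant card_atLeastAtMost diff_Suc_1)
  also have "\<dots> = (t ^ N - (- (q^2 * \<sigma>^2)) ^ N) ^ d * (1 ^ N - (- (q^2 * \<sigma>^2) * t) ^ N) ^ d
        / (t ^ n_of q * ((1 ^ N - (\<sigma>^2) ^ N) ^ d * (1 ^ N - (q^4 * \<sigma>^2) ^ N) ^ d))"
    by (simp only: factors)
  also have "\<dots> = ((t ^ N - c * U) * (1 - c * t ^ N * U)) ^ d / ((t ^ N) ^ d * (1 - U) ^ (2 * d))"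
    unfolding cU cUt U U4 tn by (simp add: power_mult_distrib mult_2 power_add)
  finally show ?thesis unfolding N_def .
qed

lemma prod_r_coef_odd:
  fixes q \<sigma> t :: complex
  assumes "root_of_unity q" "\<sigma> \<noteq> 0" "t \<noteq> 0" "odd (n_of q)" "N_of q = n_of q"
  shows "(\<Prod>i\<in>{1..n_of q}. r_coef q \<sigma> (t + inverse t) i) = R_fun q (z0 q \<sigma>) (t + inverse t)"
proof -
  define n \<tau> S where "n = n_of q" and "\<tau> = t ^ n" and "S = \<sigma> ^ n"
  have "(q^2) ^ n = 1"
    unfolding n_def n_of_def using assms(1) by (intro power_cord root_of_unity_power)
  then have "(- (q^2)) ^ n = -1" using assms(4) unfolding n_def by (simp add: power_minus_odd)
  moreover have "\<sigma> ^ (2 * n) = S^2" unfolding S_def by (simp add: power_mult mult.commute)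
  ultimately have "(\<Prod>i\<in>{1..n}. r_coef q \<sigma> (t + inverse t) i)
      = (\<tau> + S^2) * (1 + \<tau> * S^2) / (\<tau> * (1 - S^2)^2)"
    using prod_r_coef_add_inverse[OF assms(1-3), of 1] assms(5) unfolding n_def \<tau>_def by simp
  also have "\<dots> = (\<tau> + inverse \<tau> + (S + inverse S)^2 - 2) / ((S + inverse S)^2 - 4)"
    using assms(2,3) unfolding \<tau>_def S_def by (simp add: R_odd_eq_rational)
  also have "\<dots> = R_fun q (z0 q \<sigma>) (t + inverse t)"
    using assms(3-5) unfolding R_fun_def z0_def \<tau>_def S_def n_def
    by (simp add: cheb_add_inverse power_inverse)
  finally show ?thesis unfolding n_def .
qed

lemma prod_r_coef_even:
  fixes q \<sigma> t :: complex
  assumes "root_of_unity q" "\<sigma> \<noteq> 0" "t \<noteq> 0" "n_of q = 2 * N_of q" "q ^ (2 * N_of q) = -1"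
  shows "(\<Prod>i\<in>{1..n_of q}. r_coef q \<sigma> (t + inverse t) i) = R_fun q (z0 q \<sigma>) (t + inverse t)"
proof -
  define N e \<tau> S where "N = N_of q" and "e = (-1::complex) ^ N" and "\<tau> = t ^ N" and "S = \<sigma> ^ n_of q"
  have "e^2 = 1" unfolding e_def by (simp flip: power_mult add: mult.commute)
  have "(- (q^2)) ^ N = - e"
    using assms(5) unfolding e_def N_def by (simp add: power_minus[of "q^2"] flip: power_mult)
  moreover have "\<sigma> ^ (2 * N) = S" unfolding S_def N_def assms(4) ..
  ultimately have "(\<Prod>i\<in>{1..n_of q}. r_coef q \<sigma> (t + inverse t) i)
      = ((\<tau> + e * S) * (1 + e * \<tau> * S))^2 / (\<tau>^2 * (1 - S)^4)"
    using prod_r_coef_add_inverse[OF assms(1-3), of 2] assms(4) unfolding N_def \<tau>_def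
    by (simp add: mult.commute)
  also have "\<dots> = ((\<tau> + inverse \<tau> + e * (S + inverse S)) / (S + inverse S - 2))^2"
    using assms(2,3) \<open>e^2 = 1\<close> unfolding \<tau>_def S_def by (simp add: R_even_eq_rational)
  also have "\<dots> = R_fun q (z0 q \<sigma>) (t + inverse t)"
  proof -
    have "(eps_of q)^2 = (q ^ (2 * N)) ^ N"
      unfolding eps_of_def N_def power_mult[symmetric] by (simp add: power2_eq_square ac_simps)
    then have "(eps_of q)^2 = e" using assms(5) unfolding e_def N_def by simp
    then show ?thesis
      using assms(3,4) unfolding R_fun_def z0_def \<tau>_def S_def N_def
      by (simp add: cheb_add_inverse power_inverse)
  qed
  finally show ?thesis .
qed

theorem mainTheorem6:
  fixes q \<sigma> w :: complex
  assumes "root_of_unity q" and "q ^ 4 \<noteq> 1"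
    and "\<sigma> \<noteq> 0" and "general q \<sigma>"
  shows "(\<lambda>(s, t). (\<Prod>i\<in>{1..n_of q}. s i, \<Prod>i\<in>{1..n_of q}. t i)) ` E0 q \<sigma> w
         = {(x, y). x * y = R_fun q (z0 q \<sigma>) w}"
proof -
  obtain t where "t \<noteq> 0" and w: "w = t + inverse t" using ex_add_inverse_eq by (metis eq_commute)
  have prod_eq: "(\<Prod>i\<in>{1..n_of q}. r_coef q \<sigma> (t + inverse t) i) = R_fun q (z0 q \<sigma>) (t + inverse t)"
    using assms(1)
  proof (cases rule: n_of_cases)
    case 1
    then show ?thesis by (rule prod_r_coef_odd[OF assms(1,3) \<open>t \<noteq> 0\<close>])
  next
    case 2
    then show ?thesis by (rule prod_r_coef_even[OF assms(1,3) \<open>t \<noteq> 0\<close>])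
  qed
  have "{1..n_of q} \<noteq> {}"
    using cord_pos[OF root_of_unity_power[OF assms(1)], of 2] unfolding n_of_def by simp
  then show ?thesis
    unfolding E0_def w prod_eq[symmetric] by (intro image_prod_pairs_eq_hyperbola) simp_all
qed

end
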